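(* Let $n,m\in\mathbb{N}$. Then $\mathcal{NN}^{\mathrm{card}}_{n,m,n+m+1}$ is universal, where $\mathrm{card}:\mathbb{C}\to\mathbb{C}$ is the complex cardioid, $\mathrm{card}(z)=\frac12\left(1+\frac{\mathrm{Re}(z)}{|z|}\right)z$ for $z\neq0$ and $\mathrm{card}(0)=0$.
   Context: For $\varrho:\mathbb{C}\to\mathbb{C}$ and $n,m,W\in\mathbb{N}$, $\mathcal{NN}^\varrho_{n,m,W}$ denotes the set of all functions $\mathbb{C}^n\to\mathbb{C}^m$ of the form $V_L\circ\varrho^{\times W}\circ V_{L-1}\circ\cdots\circ\varrho^{\times W}\circ V_1$ with arbitrary depth $L\ge 2$, where $V_1:\mathbb{C}^n\to\mathbb{C}^W$, $V_2,\dots,V_{L-1}:\mathbb{C}^W\to\mathbb{C}^W$, $V_L:\mathbb{C}^W\to\mathbb{C}^m$ are $\mathbb{C}$-affine maps ($z\mapsto Az+b$ with complex $A,b$) and $\varrho^{\times W}$ applies $\varrho$ componentwise. A class $\mathcal{F}\subseteq C(\mathbb{C}^n;\mathbb{C}^m)$ is universal if for every $g\in C(\mathbb{C}^n;\mathbb{C}^m)$, compact $K\subseteq\mathbb{C}^n$ and $\varepsilon>0$ there is $f\in\mathcal{F}$ with $\sup_{z\in K}\|f(z)-g(z)\|<\varepsilon$. *)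

theory Defs
  imports "HOL-Analysis.Analysis"
begin

definition cardioid :: "complex \<Rightarrow> complex" where
  "cardioid z = (if z = 0 then 0
                 else complex_of_real ((1 + Re z / cmod z) / 2) * z)"

definition cx_affine :: "(complex ^ 'a \<Rightarrow> complex ^ 'b) \<Rightarrow> bool" where
  "cx_affine V \<longleftrightarrow> (\<exists>(A :: complex ^ 'a ^ 'b) c. V = (\<lambda>z. A *v z + c))"

definition act_vec :: "(complex \<Rightarrow> complex) \<Rightarrow> complex ^ 'w \<Rightarrow> complex ^ 'w" where
  "act_vec \<rho> x = (\<chi> i. \<rho> (x $ i))"

inductive_set nn_hidden :: "(complex \<Rightarrow> complex) \<Rightarrow> (complex ^ 'n \<Rightarrow> complex ^ 'w) set"
  for \<rho> :: "complex \<Rightarrow> complex" where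
  first: "cx_affine (V1 :: complex ^ 'n \<Rightarrow> complex ^ 'w) \<Longrightarrow> (\<lambda>z. act_vec \<rho> (V1 z)) \<in> nn_hidden \<rho>"
| step: "h \<in> nn_hidden \<rho> \<Longrightarrow> cx_affine (V :: complex ^ 'w \<Rightarrow> complex ^ 'w)
          \<Longrightarrow> (\<lambda>z. act_vec \<rho> (V (h z))) \<in> nn_hidden \<rho>"

text \<open>NN^rho_{n,m,W}: the width W is CARD('w), all depths L >= 2.\<close>
definition NN :: "(complex \<Rightarrow> complex) \<Rightarrow> 'w::finite itself \<Rightarrow> (complex ^ 'n \<Rightarrow> complex ^ 'm) set" where
  "NN \<rho> _ = {(\<lambda>z. VL (h z)) | (VL :: complex ^ 'w \<Rightarrow> complex ^ 'm) h.
                 cx_affine VL \<and> h \<in> nn_hidden \<rho>}"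

definition universal :: "(complex ^ 'n \<Rightarrow> complex ^ 'm) set \<Rightarrow> bool" where
  "universal F \<longleftrightarrow> (\<forall>g K \<epsilon>. continuous_on UNIV g \<and> compact K \<and> \<epsilon> > 0 \<longrightarrow>
      (\<exists>f\<in>F. \<forall>z\<in>K. norm (f z - g z) < \<epsilon>))"

end

(*
  A network of width W is treated as a register machine on C^W: n registers hold the input,
  m registers accumulate the output and one register is scratch space. It suffices to show
  that every step "add h(input) to an accumulator" with continuous h is approximable, locally
  uniformly, by networks followed by an affine map, since such maps are closed under
  composition and locally uniform limits.

  The cardioid enters through two facts. Far out on the positive real axis it is close to the
  identity, so registers can be carried through a layer unchanged. Near 1 it expands as
  cardioid(1 + d s) = 1 + d s - (d Im s)^2/4 + O(d^3), so Im(t)^2, and after a shift Im(t),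
  can be added to a register for any affine form t of the other registers. Sums, squares and hence products of realizable
  real functions of the input are realizable, so by Stone-Weierstrass all continuous ones are;
  real and imaginary parts of h are added separately.
*)
theory Submission
  imports Defs "HOL-Library.Cardinality"
begin

section \<open>Affine forms and affine maps\<close>

definition affine_form :: "(complex^'a::finite \<Rightarrow> complex) \<Rightarrow> bool" where
  "affine_form f \<longleftrightarrow> (\<exists>a b. \<forall>x. f x = (\<Sum>j\<in>UNIV. a j * x$j) + b)"

lemma affine_form_const: "affine_form (\<lambda>x. c)"
  unfolding affine_form_def by (rule exI[of _ "\<lambda>j. 0"]) simp

lemma affine_form_component: "affine_form (\<lambda>x. x$i)"
  unfolding affine_form_def
  by (intro exI[of _ "\<lambda>j. if j = i then 1 else 0"] exI[of _ 0] allI)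
     (simp add: if_distrib[of "\<lambda>c. c * _"] cong: if_cong)

lemma affine_form_add: "affine_form f \<Longrightarrow> affine_form g \<Longrightarrow> affine_form (\<lambda>x. f x + g x)"
  unfolding affine_form_def
proof (elim exE)
  fix a b a' b'
  assume "\<forall>x. f x = (\<Sum>j\<in>UNIV. a j * x$j) + b" "\<forall>x. g x = (\<Sum>j\<in>UNIV. a' j * x$j) + b'"
  then show "\<exists>a b. \<forall>x. f x + g x = (\<Sum>j\<in>UNIV. a j * x $ j) + b"
    by (intro exI[of _ "\<lambda>j. a j + a' j"] exI[of _ "b + b'"]) (simp add: distrib_right sum.distrib)
qed

lemma affine_form_scale: "affine_form f \<Longrightarrow> affine_form (\<lambda>x. c * f x)"
  unfolding affine_form_def
proof (elim exE)
  fix a b assume "\<forall>x. f x = (\<Sum>j\<in>UNIV. a j * x$j) + b"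
  then show "\<exists>a b. \<forall>x. c * f x = (\<Sum>j\<in>UNIV. a j * x $ j) + b"
    by (intro exI[of _ "\<lambda>j. c * a j"] exI[of _ "c * b"])
       (simp add: distrib_left sum_distrib_left mult.assoc)
qed

lemma affine_form_diff: "affine_form f \<Longrightarrow> affine_form g \<Longrightarrow> affine_form (\<lambda>x. f x - g x)"
  using affine_form_add[of f "\<lambda>x. (-1) * g x"] affine_form_scale[of g "-1"] by simp

lemma affine_form_continuous: "affine_form f \<Longrightarrow> continuous_on UNIV f"
  unfolding affine_form_def by (auto intro!: continuous_intros)

lemma cx_affine_iff_affine_forms:
  "cx_affine V \<longleftrightarrow> (\<forall>k. affine_form (\<lambda>x. V x $ k))"
proof
  assume "cx_affine V"
  then obtain A c where "V = (\<lambda>z. A *v z + c)" unfolding cx_affine_def by blast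
  then show "\<forall>k. affine_form (\<lambda>x. V x $ k)" unfolding affine_form_def
    by (auto intro!: exI[of _ "\<lambda>j. A$_$j"] simp: matrix_vector_mult_def)
next
  assume "\<forall>k. affine_form (\<lambda>x. V x $ k)"
  then have "\<forall>k. \<exists>ab. \<forall>x. V x $ k = (\<Sum>i\<in>UNIV. fst ab i * x$i) + snd ab"
    unfolding affine_form_def by fastforce
  then obtain ab where ab: "\<And>k x. V x $ k = (\<Sum>i\<in>UNIV. fst (ab k) i * x$i) + snd (ab k)"
    by metis
  show "cx_affine V" unfolding cx_affine_def
    by (intro exI[of _ "\<chi> k i. fst (ab k) i"] exI[of _ "\<chi> k. snd (ab k)"])
       (auto simp: fun_eq_iff vec_eq_iff matrix_vector_mult_def ab)
qed

lemma affine_form_compose: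
  assumes "affine_form f" "cx_affine V"
  shows "affine_form (\<lambda>x. f (V x))"
proof -
  obtain a b where f: "\<And>x. f x = (\<Sum>j\<in>UNIV. a j * x$j) + b"
    using assms(1) unfolding affine_form_def by blast
  obtain A c where V: "V = (\<lambda>z. A *v z + c)" using assms(2) unfolding cx_affine_def by blast
  have "f (V x) = (\<Sum>i\<in>UNIV. (\<Sum>j\<in>UNIV. a j * A$j$i) * x$i) + ((\<Sum>j\<in>UNIV. a j * c$j) + b)" for x
  proof -
    have "f (V x) = (\<Sum>j\<in>UNIV. \<Sum>i\<in>UNIV. a j * A$j$i * x$i) + ((\<Sum>j\<in>UNIV. a j * c$j) + b)"
      by (simp add: f V matrix_vector_mult_def distrib_left sum.distrib sum_distrib_left mult.assoc)
    then show ?thesis by (subst (asm) sum.swap) (simp add: sum_distrib_right)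
  qed
  then show ?thesis unfolding affine_form_def
    by (intro exI[of _ "\<lambda>i. \<Sum>j\<in>UNIV. a j * A$j$i"] exI[of _ "(\<Sum>j\<in>UNIV. a j * c$j) + b"]) blast
qed

lemma cx_affine_matrix_vector_mult: "cx_affine ((*v) A)"
  unfolding cx_affine_def by (intro exI[of _ A] exI[of _ 0]) simp

lemma norm_vec_le_sum_norm_nth: "norm (x :: 'a::real_normed_vector^'n) \<le> (\<Sum>i\<in>UNIV. norm (x$i))"
  by (simp add: norm_vec_def L2_set_le_sum)

lemma cx_affine_translation: "cx_affine (\<lambda>x::complex^'a::finite. x + c)"
  unfolding cx_affine_def by (intro exI[of _ "mat 1"] exI[of _ c]) simp

lemma cx_affine_compose:
  assumes "cx_affine V" "cx_affine W" shows "cx_affine (\<lambda>x. V (W x))"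
proof -
  obtain A c where "V = (\<lambda>z. A *v z + c)" using assms(1) unfolding cx_affine_def by blast
  moreover obtain B d where "W = (\<lambda>z. B *v z + d)" using assms(2) unfolding cx_affine_def by blast
  ultimately show ?thesis unfolding cx_affine_def
    by (intro exI[of _ "A ** B"] exI[of _ "A *v d + c"])
       (simp add: matrix_vector_right_distrib matrix_vector_mul_assoc add.assoc)
qed

lemma cx_affine_lipschitz:
  assumes "cx_affine V"
  obtains B where "B > 0" "\<And>x y. norm (V x - V y) \<le> B * norm (x - y)"
proof -
  obtain A c where V: "V = (\<lambda>z. A *v z + c)" using assms unfolding cx_affine_def by blast
  obtain B where "B > 0" "\<And>x. norm (A *v x) \<le> norm x * B"
    using bounded_linear.pos_bounded[OF matrix_vector_mul_bounded_linear[of A]] by blast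
  moreover have "V x - V y = A *v (x - y)" for x y by (simp add: V matrix_vector_mult_diff_distrib)
  ultimately show ?thesis using that by (metis mult.commute)
qed

lemma cx_affine_continuous: "cx_affine V \<Longrightarrow> continuous_on UNIV V"
  unfolding cx_affine_def by (auto intro!: continuous_intros matrix_vector_mul_bounded_linear
    intro: linear_continuous_on)

section \<open>Estimates for the cardioid\<close>

lemma norm_cardioid_le: "norm (cardioid z) \<le> norm z"
proof (cases "z = 0")
  case False
  have "- cmod z \<le> Re z" "Re z \<le> cmod z" using abs_Re_le_cmod[of z] by (simp_all add: abs_le_iff)
  then have "0 \<le> (1 + Re z / cmod z) / 2" "(1 + Re z / cmod z) / 2 \<le> 1"
    using False by (simp_all add: field_simps)
  moreover have "cardioid z = ((1 + Re z / cmod z) / 2) *\<^sub>R z"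
    using False by (simp add: cardioid_def scaleR_conv_of_real)
  ultimately show ?thesis by (simp only: norm_scaleR abs_of_nonneg mult_left_le_one_le norm_ge_zero)
qed (simp add: cardioid_def)

lemma cardioid_continuous: "continuous_on UNIV cardioid"
proof -
  have "isCont cardioid z" for z
  proof (cases "z = 0")
    case False
    have "\<forall>\<^sub>F x in nhds z. x \<noteq> 0" using False by (rule t1_space_nhds)
    then have "\<forall>\<^sub>F x in nhds z. complex_of_real ((1 + Re x / cmod x) / 2) * x = cardioid x"
      by eventually_elim (simp add: cardioid_def)
    moreover have "isCont (\<lambda>x. complex_of_real ((1 + Re x / cmod x) / 2) * x) z"
      using False by (intro continuous_intros) auto
    ultimately show ?thesis by (simp add: isCont_cong)
  next
    case True
    have "(cardioid \<longlongrightarrow> 0) (at 0)"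
      by (rule tendsto_norm_zero_cancel, rule tendsto_sandwich[of "\<lambda>_. 0" _ _ norm])
         (auto simp: norm_cardioid_le intro!: tendsto_eq_intros)
    then show ?thesis using True by (simp add: isCont_def cardioid_def)
  qed
  then show ?thesis by (simp add: continuous_at_imp_continuous_on)
qed

lemma cardioid_minus_self:
  assumes "Re w > 0"
  shows "cardioid w - w = - of_real ((Im w)^2 / (2 * cmod w * (cmod w + Re w))) * w"
proof -
  have r: "cmod w > 0" using assms by auto
  have rr: "cmod w + Re w > 0" using assms r by linarith
  have "(Re w - cmod w) * (cmod w + Re w) = -((Im w)^2)"
    using cmod_power2[of w] by (simp add: algebra_simps power2_eq_square)
  have "(Re w / cmod w - 1) / 2 = (Re w - cmod w) / (2 * cmod w)"
    using r by (simp add: field_simps)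
  also have "\<dots> = (Re w - cmod w) * (cmod w + Re w) / (2 * cmod w * (cmod w + Re w))"
    using rr by simp
  also have "\<dots> = - ((Im w)^2 / (2 * cmod w * (cmod w + Re w)))" by (simp add: \<open>_ = -((Im w)^2)\<close>)
  finally have "(Re w / cmod w - 1) / 2 = - ((Im w)^2 / (2 * cmod w * (cmod w + Re w)))" .
  moreover have "cardioid w - w = of_real ((Re w / cmod w - 1) / 2) * w"
    using r by (simp add: cardioid_def algebra_simps add_divide_distrib diff_divide_distrib)
  ultimately show ?thesis by simp
qed

lemma norm_cardioid_shift_le:
  assumes C: "C > 0" and v: "2 * cmod v \<le> C"
  shows "cmod (cardioid (of_real C + v) - (of_real C + v)) \<le> (cmod v)^2 / C"
proof -
  define w where "w = of_real C + v"
  have Re_w: "Re w \<ge> C / 2" using abs_Re_le_cmod[of v] v by (simp add: w_def)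
  have r: "cmod w \<ge> Re w" by (rule complex_Re_le_cmod)
  have pos: "Re w > 0" "cmod w > 0" "cmod w + Re w > 0" using Re_w r C by linarith+
  have "cmod (cardioid w - w) = (Im w)^2 / (2 * cmod w * (cmod w + Re w)) * cmod w"
    unfolding cardioid_minus_self[OF pos(1)] norm_minus_cancel norm_mult norm_of_real
    using pos by (simp add: abs_of_nonneg)
  also have "\<dots> = (Im w)^2 / (2 * (cmod w + Re w))"
  proof -
    have "(Im w)^2 * cmod w / (cmod w * (2 * (cmod w + Re w))) = (Im w)^2 / (2 * (cmod w + Re w))"
      using pos by simp
    then show ?thesis by (simp add: mult.commute mult.left_commute)
  qed
  also have "\<dots> \<le> (cmod v)^2 / C"
  proof (rule frac_le)
    show "(Im w)^2 \<le> (cmod v)^2"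
      using power_mono[OF abs_Im_le_cmod[of v], of 2] by (simp add: w_def)
    show "C \<le> 2 * (cmod w + Re w)" using Re_w r C by simp
  qed (use C in simp_all)
  finally show ?thesis by (simp add: w_def)
qed

lemma norm_Re_weight_near_one:
  assumes w: "cmod (w - 1) \<le> a" and a: "a \<le> 1/2"
  shows "1/2 \<le> cmod w * (cmod w + Re w)" and "\<bar>2 - cmod w * (cmod w + Re w)\<bar> \<le> 5 * a"
proof -
  have a0: "a \<ge> 0" using w norm_ge_zero order_trans by blast
  have Re_w: "1 - a \<le> Re w" "Re w \<le> 1 + a" using abs_Re_le_cmod[of "w - 1"] w by auto
  have "1 - a \<le> cmod w" using norm_triangle_ineq2[of 1 "1 - w"] w by (simp add: norm_minus_commute)
  moreover have "cmod w \<le> 1 + a" using norm_triangle_ineq[of 1 "w - 1"] w by simp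
  ultimately have lower: "2 - 4 * a + 2 * (a * a) \<le> cmod w * (cmod w + Re w)"
    and upper: "cmod w * (cmod w + Re w) \<le> 2 + 4 * a + 2 * (a * a)"
    using Re_w a a0 mult_mono[of "1 - a" "cmod w" "2 - 2 * a" "cmod w + Re w"]
      mult_mono[of "cmod w" "1 + a" "cmod w + Re w" "2 + 2 * a"]
    by (simp_all add: algebra_simps)
  have "0 \<le> (1/2 - a) * (3/2 - a)" using a by simp
  also have "\<dots> = 3/4 - 2 * a + a * a" by (simp add: field_simps)
  finally have "0 \<le> 3/4 - 2 * a + a * a" .
  then show "1/2 \<le> cmod w * (cmod w + Re w)" using lower by linarith
  have "a * a \<le> a * (1/2)" using a a0 by (intro mult_left_mono) auto
  then show "\<bar>2 - cmod w * (cmod w + Re w)\<bar> \<le> 5 * a"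
    using lower upper a0 zero_le_square[of a] unfolding abs_le_iff by linarith
qed

lemma cardioid_second_order:
  assumes d: "d > 0" and ds: "d * cmod s \<le> 1/2"
  shows "cmod (-4 * (cardioid (1 + of_real d * s) - 1 - of_real d * s) / (of_real d)^2 - of_real ((Im s)^2))
          \<le> 16 * d * (cmod s)^3"
proof -
  define w where "w = 1 + of_real d * s"
  define a where "a = d * cmod s"
  define q where "q = cmod w * (cmod w + Re w)"
  have a0: "a \<ge> 0" and w1: "cmod (w - 1) = a" using d by (simp_all add: w_def a_def norm_mult)
  have q: "1/2 \<le> q" "\<bar>2 - q\<bar> \<le> 5 * a"
    using norm_Re_weight_near_one[of w a] w1 ds unfolding q_def a_def by simp_all
  have Re_w: "Re w > 0" using abs_Re_le_cmod[of "w - 1"] w1 ds a_def by simp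
  have Im_w: "Im w = d * Im s" by (simp add: w_def)
  have "-4 * (- of_real X * w) / (of_real d)^2 = of_real (4 * X / d^2) * w" for X
    by (simp add: field_simps)
  then have "-4 * (cardioid w - w) / (of_real d)^2 = of_real (4 * ((d * Im s)^2 / (2 * q)) / d^2) * w"
    unfolding cardioid_minus_self[OF Re_w] Im_w q_def by (simp only: mult.assoc)
  also have "4 * ((d * Im s)^2 / (2 * q)) / d^2 = 2 * (Im s)^2 / q"
    using d q(1) by (simp add: field_simps power2_eq_square)
  finally have "-4 * (cardioid w - w) / (of_real d)^2 = of_real (2 * (Im s)^2 / q) * w" .
  then have E: "-4 * (cardioid w - w) / (of_real d)^2 - of_real ((Im s)^2)
      = of_real ((Im s)^2) * ((2 * w - of_real q) / of_real q)"
    using q(1) by (simp add: field_simps)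
  have "cmod (2 * w - of_real q) \<le> cmod (2 * (w - 1)) + cmod (2 - of_real q)"
    using norm_triangle_ineq[of "2 * (w - 1)" "2 - of_real q"] by (simp add: algebra_simps)
  also have "\<dots> \<le> 2 * a + 5 * a"
  proof -
    have "cmod (2 - of_real q) = \<bar>2 - q\<bar>" by (metis norm_of_real of_real_diff of_real_numeral)
    moreover have "cmod (2 * (w - 1)) = 2 * a" unfolding norm_mult w1 by simp
    ultimately show ?thesis using q(2) by linarith
  qed
  finally have "cmod (2 * w - of_real q) / q \<le> 7 * a / (1/2)"
    using q(1) a0 by (intro frac_le) auto
  then have "cmod ((2 * w - of_real q) / of_real q) \<le> 14 * a"
    using q(1) by (simp add: norm_divide)
  then have "cmod (-4 * (cardioid w - w) / (of_real d)^2 - of_real ((Im s)^2)) \<le> (Im s)^2 * (14 * a)"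
    unfolding E norm_mult norm_of_real by (simp add: mult_left_mono)
  also have "\<dots> \<le> (cmod s)^2 * (14 * a)"
    using a0 power_mono[OF abs_Im_le_cmod[of s], of 2] by (intro mult_right_mono) auto
  also have "\<dots> \<le> 16 * d * (cmod s)^3"
    using d by (simp add: a_def power3_eq_cube power2_eq_square)
  finally show ?thesis by (simp add: w_def diff_diff_eq)
qed

section \<open>Maps approximable by networks\<close>

lemma act_vec_continuous:
  assumes "continuous_on UNIV \<rho>" shows "continuous_on UNIV (act_vec \<rho>)"
  unfolding act_vec_def
proof (intro continuous_on_vec_lambda)
  fix i show "continuous_on UNIV (\<lambda>x::complex^'a. \<rho> (x $ i))"
    using continuous_on_compose2[OF assms, of UNIV "\<lambda>x. x $ i"] by (simp add: continuous_on_component)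
qed

lemma nn_hidden_precompose:
  assumes "h \<in> nn_hidden \<rho>" "cx_affine V0"
  shows "(\<lambda>z. h (V0 z)) \<in> nn_hidden \<rho>"
  using assms(1)
proof induction
  case (first V1)
  show ?case using nn_hidden.first[OF cx_affine_compose[OF first assms(2)]] .
next
  case (step h V)
  show ?case using nn_hidden.step[OF step(3) step(2)] .
qed

lemma nn_hidden_compose:
  fixes h1 h2 :: "complex^'w::finite \<Rightarrow> complex^'w"
  assumes "h2 \<in> nn_hidden \<rho>" "h1 \<in> nn_hidden \<rho>" "cx_affine U"
  shows "(\<lambda>x. h2 (U (h1 x))) \<in> nn_hidden \<rho>"
  using assms(1)
proof induction
  case (first V1)
  show ?case using nn_hidden.step[OF assms(2) cx_affine_compose[OF first assms(3)]] .
next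
  case (step h V)
  show ?case using nn_hidden.step[OF step(3) step(2)] .
qed

text \<open>Continuous self-maps of \<open>\<complex>\<^sup>W\<close> that networks of width \<open>W\<close> approximate
  locally uniformly, up to a final affine layer; unlike \<^const>\<open>NN\<close>, this class is closed
  under composition.\<close>
definition net_approximable :: "(complex \<Rightarrow> complex) \<Rightarrow> (complex^'w::finite \<Rightarrow> complex^'w) \<Rightarrow> bool" where
  "net_approximable \<rho> G \<longleftrightarrow> continuous_on UNIV G \<and> (\<forall>K e. compact K \<and> e > 0 \<longrightarrow>
     (\<exists>U (h :: complex^'w \<Rightarrow> complex^'w). cx_affine U \<and> h \<in> nn_hidden \<rho> \<and>
        (\<forall>x\<in>K. norm (U (h x) - G x) < e)))"

lemma net_approximableD:
  assumes "net_approximable \<rho> G" "compact K" "e > 0"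
  obtains U and h :: "complex^'w::finite \<Rightarrow> complex^'w"
  where "cx_affine U" "h \<in> nn_hidden \<rho>" "\<And>x. x \<in> K \<Longrightarrow> norm (U (h x) - G x) < e"
proof -
  have "\<exists>U (h :: complex^'w \<Rightarrow> complex^'w). cx_affine U \<and> h \<in> nn_hidden \<rho> \<and>
          (\<forall>x\<in>K. norm (U (h x) - G x) < e)"
    using assms unfolding net_approximable_def by simp
  then show ?thesis using that by blast
qed

lemma net_approximable_compose:
  fixes F G :: "complex^'w::finite \<Rightarrow> complex^'w"
  assumes F: "net_approximable \<rho> F" and G: "net_approximable \<rho> G"
  shows "net_approximable \<rho> (\<lambda>x. G (F x))"
  unfolding net_approximable_def
proof (intro conjI allI impI)
  have cF: "continuous_on UNIV F" and cG: "continuous_on UNIV G"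
    using F G by (auto simp: net_approximable_def)
  show "continuous_on UNIV (\<lambda>x. G (F x))" using continuous_on_compose2[OF cG cF] by simp
  fix K :: "(complex^'w) set" and e :: real
  assume "compact K \<and> e > 0"
  then have K: "compact K" and e: "e > 0" by auto
  define L where "L = {y + v | y v. y \<in> F ` K \<and> v \<in> cball 0 1}"
  have "compact (F ` K)" by (rule compact_continuous_image[OF continuous_on_subset[OF cF] K]) simp
  then have "compact L" unfolding L_def by (intro compact_sums) simp_all
  then have "uniformly_continuous_on L G"
    by (intro compact_uniformly_continuous continuous_on_subset[OF cG]) simp_all
  moreover have "e/2 > 0" using e by simp
  ultimately obtain d where d: "d > 0"
    and dG: "\<And>y y'. y \<in> L \<Longrightarrow> y' \<in> L \<Longrightarrow> dist y' y < d \<Longrightarrow> dist (G y') (G y) < e/2"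
    unfolding uniformly_continuous_on_def by blast
  obtain U1 and h1 :: "complex^'w \<Rightarrow> complex^'w" where U1: "cx_affine U1" "h1 \<in> nn_hidden \<rho>"
    and a1: "\<And>x. x \<in> K \<Longrightarrow> norm (U1 (h1 x) - F x) < min d 1"
    using net_approximableD[OF F K, of "min d 1"] d by auto
  obtain U2 and h2 :: "complex^'w \<Rightarrow> complex^'w" where U2: "cx_affine U2" "h2 \<in> nn_hidden \<rho>"
    and a2: "\<And>y. y \<in> L \<Longrightarrow> norm (U2 (h2 y) - G y) < e/2"
    using net_approximableD[OF G \<open>compact L\<close>, of "e/2"] e by auto
  show "\<exists>U (h :: complex^'w \<Rightarrow> complex^'w). cx_affine U \<and> h \<in> nn_hidden \<rho> \<and>
          (\<forall>x\<in>K. norm (U (h x) - G (F x)) < e)"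
  proof (intro exI conjI ballI)
    show "cx_affine U2" "(\<lambda>x. h2 (U1 (h1 x))) \<in> nn_hidden \<rho>"
      using U2 nn_hidden_compose[OF U2(2) U1(2) U1(1)] by auto
    fix x assume x: "x \<in> K"
    have FL: "F x \<in> L" unfolding L_def using x by force
    have yL: "U1 (h1 x) \<in> L" unfolding L_def
      by (rule CollectI, rule exI[of _ "F x"], rule exI[of _ "U1 (h1 x) - F x"])
         (use x a1[OF x] in \<open>auto simp: dist_norm norm_minus_commute\<close>)
    have "norm (U2 (h2 (U1 (h1 x))) - G (F x))
        \<le> norm (U2 (h2 (U1 (h1 x))) - G (U1 (h1 x))) + norm (G (U1 (h1 x)) - G (F x))"
      by (rule norm_diff_triangle_le[where y = "G (U1 (h1 x))"]) simp_all
    also have "\<dots> < e/2 + e/2"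
      using a2[OF yL] dG[OF FL yL] a1[OF x] by (intro add_strict_mono) (auto simp: dist_norm)
    finally show "norm (U2 (h2 (U1 (h1 x))) - G (F x)) < e" by simp
  qed
qed

lemma net_approximable_compose_eq:
  fixes F G H :: "complex^'w::finite \<Rightarrow> complex^'w"
  assumes "net_approximable \<rho> F" "net_approximable \<rho> G" "\<And>x. G (F x) = H x"
  shows "net_approximable \<rho> H"
  using net_approximable_compose[OF assms(1,2)] assms(3) by simp

lemma net_approximable_limit:
  fixes G :: "complex^'w::finite \<Rightarrow> complex^'w"
  assumes "continuous_on UNIV G"
    and approx: "\<And>K e. compact K \<Longrightarrow> e > 0 \<Longrightarrow>
                   \<exists>G'. net_approximable \<rho> G' \<and> (\<forall>x\<in>K. norm (G' x - G x) < e)"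
  shows "net_approximable \<rho> G"
  unfolding net_approximable_def
proof (intro conjI allI impI assms(1))
  fix K :: "(complex^'w) set" and e :: real
  assume "compact K \<and> e > 0"
  then have K: "compact K" and e: "e > 0" by auto
  obtain G' where G': "net_approximable \<rho> G'" and g1: "\<And>x. x \<in> K \<Longrightarrow> norm (G' x - G x) < e/2"
    using approx[OF K, of "e/2"] e by auto
  obtain U and h :: "complex^'w \<Rightarrow> complex^'w" where Uh: "cx_affine U" "h \<in> nn_hidden \<rho>"
    and g2: "\<And>x. x \<in> K \<Longrightarrow> norm (U (h x) - G' x) < e/2"
    using net_approximableD[OF G' K, of "e/2"] e by auto
  have "norm (U (h x) - G x) < e" if "x \<in> K" for x
    using norm_diff_triangle_less[OF g2[OF that] g1[OF that]] by simp
  then show "\<exists>U (h :: complex^'w \<Rightarrow> complex^'w). cx_affine U \<and> h \<in> nn_hidden \<rho> \<and>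
               (\<forall>x\<in>K. norm (U (h x) - G x) < e)"
    using Uh by blast
qed

lemma net_approximable_one_layer:
  fixes U V :: "complex^'w::finite \<Rightarrow> complex^'w"
  assumes "continuous_on UNIV \<rho>" "cx_affine U" "cx_affine V"
  shows "net_approximable \<rho> (\<lambda>x. U (act_vec \<rho> (V x)))"
  unfolding net_approximable_def
proof (intro conjI allI impI)
  show "continuous_on UNIV (\<lambda>x. U (act_vec \<rho> (V x)))"
    by (intro continuous_on_compose2[OF cx_affine_continuous[OF assms(2)]]
        continuous_on_compose2[OF act_vec_continuous[OF assms(1)]] cx_affine_continuous[OF assms(3)]) auto
  show "\<exists>U' (h :: complex^'w \<Rightarrow> complex^'w). cx_affine U' \<and> h \<in> nn_hidden \<rho> \<and>
          (\<forall>x\<in>K. norm (U' (h x) - U (act_vec \<rho> (V x))) < e)" if "compact K \<and> e > 0" for K e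
    by (rule exI[of _ U], rule exI[of _ "\<lambda>x. act_vec \<rho> (V x)"])
       (use that assms(2) nn_hidden.first[OF assms(3)] in auto)
qed

definition act_on :: "'w set \<Rightarrow> (complex \<Rightarrow> complex) \<Rightarrow> complex^'w \<Rightarrow> complex^'w" where
  "act_on P \<rho> x = (\<chi> j. if j \<in> P then \<rho> (x$j) else x$j)"

lemma act_on_continuous:
  assumes "continuous_on UNIV \<rho>" shows "continuous_on UNIV (act_on P \<rho>)"
  unfolding act_on_def
proof (intro continuous_on_vec_lambda)
  fix j show "continuous_on UNIV (\<lambda>x::complex^'a. if j \<in> P then \<rho> (x $ j) else x $ j)"
    using continuous_on_compose2[OF assms, of UNIV "\<lambda>x. x $ j"]
    by (cases "j \<in> P") (simp_all add: continuous_on_component)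
qed

lemma norm_shifted_cardioid_minus_act_on_le:
  fixes y :: "complex^'w::finite" and C :: real and P :: "'w set"
  assumes C: "C > 0" "2 * norm y \<le> C"
  defines "S \<equiv> \<chi> j. if j \<in> P then 0 else of_real C"
  shows "norm (act_vec cardioid (y + S) - S - act_on P cardioid y) \<le> CARD('w) * ((norm y)^2 / C)"
proof -
  have "norm ((act_vec cardioid (y + S) - S - act_on P cardioid y) $ j) \<le> (norm y)^2 / C" for j
  proof (cases "j \<in> P")
    case False
    have yj: "norm (y $ j) \<le> norm y" by (rule Finite_Cartesian_Product.norm_nth_le)
    have "norm ((act_vec cardioid (y + S) - S - act_on P cardioid y) $ j)
        = norm (cardioid (of_real C + y $ j) - (of_real C + y $ j))"
      using False by (simp add: S_def act_vec_def act_on_def add.commute diff_diff_eq)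
    also have "\<dots> \<le> (norm (y $ j))^2 / C"
      using yj C by (intro norm_cardioid_shift_le) auto
    also have "\<dots> \<le> (norm y)^2 / C" using yj C by (intro divide_right_mono power_mono) auto
    finally show ?thesis .
  qed (use C in \<open>simp add: S_def act_vec_def act_on_def\<close>)
  then have "norm (act_vec cardioid (y + S) - S - act_on P cardioid y) \<le> (\<Sum>j\<in>(UNIV::'w set). (norm y)^2 / C)"
    by (intro order_trans[OF norm_vec_le_sum_norm_nth] sum_mono)
  then show ?thesis by simp
qed

text \<open>Outside \<open>P\<close> the cardioid acts almost as the identity on inputs shifted far along the
  positive real axis.\<close>
lemma net_approximable_partial_cardioid:
  fixes U V :: "complex^'w::finite \<Rightarrow> complex^'w"
  assumes U: "cx_affine U" and V: "cx_affine V"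
  shows "net_approximable cardioid (\<lambda>x. U (act_on P cardioid (V x)))"
proof (rule net_approximable_limit)
  show "continuous_on UNIV (\<lambda>x. U (act_on P cardioid (V x)))"
    by (intro continuous_on_compose2[OF cx_affine_continuous[OF U]]
        continuous_on_compose2[OF act_on_continuous[OF cardioid_continuous]] cx_affine_continuous[OF V]) auto
  fix K :: "(complex^'w) set" and e :: real
  assume K: "compact K" and e: "e > 0"
  have "compact (V ` K)"
    by (rule compact_continuous_image[OF continuous_on_subset[OF cx_affine_continuous[OF V]] K]) simp
  then have "bounded (V ` K)" by (rule compact_imp_bounded)
  then obtain M where M: "M > 0" "\<And>x. x \<in> K \<Longrightarrow> norm (V x) \<le> M"
    unfolding bounded_pos by auto
  obtain B where B: "B > 0" "\<And>x y. norm (U x - U y) \<le> B * norm (x - y)"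
    using cx_affine_lipschitz[OF U] by metis
  define N where "N = real CARD('w)"
  define C where "C = 2 * M + B * N * M^2 / e + 1"
  have "B * N * M^2 / e \<ge> 0" using B e by (simp add: N_def)
  moreover have "e * C = e * (2 * M) + B * N * M^2 + e" using e by (simp add: C_def field_simps)
  moreover have "e * (2 * M) > 0" using e M by simp
  ultimately have C: "C > 0" "2 * M \<le> C" "B * N * M^2 < e * C"
    using M e unfolding C_def by linarith+
  define S :: "complex^'w" where "S = (\<chi> j. if j \<in> P then 0 else of_real C)"
  show "\<exists>G'. net_approximable cardioid G' \<and> (\<forall>x\<in>K. norm (G' x - U (act_on P cardioid (V x))) < e)"
  proof (intro exI conjI ballI)
    have "cx_affine (\<lambda>y. U (y + - S))" "cx_affine (\<lambda>x. V x + S)"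
      using cx_affine_compose[OF U cx_affine_translation[of "- S"]]
        cx_affine_compose[OF cx_affine_translation[of S] V]
      by auto
    then show "net_approximable cardioid (\<lambda>x. U (act_vec cardioid (V x + S) - S))"
      using net_approximable_one_layer[OF cardioid_continuous] by simp
    fix x assume x: "x \<in> K"
    have "norm (act_vec cardioid (V x + S) - S - act_on P cardioid (V x)) \<le> N * ((norm (V x))^2 / C)"
      using norm_shifted_cardioid_minus_act_on_le[of C "V x" P] M(2)[OF x] C unfolding S_def N_def by simp
    also have "\<dots> \<le> N * (M^2 / C)"
      using M(2)[OF x] C(1) by (intro mult_left_mono divide_right_mono power_mono) (auto simp: N_def)
    finally have "norm (U (act_vec cardioid (V x + S) - S) - U (act_on P cardioid (V x))) \<le> B * (N * (M^2 / C))"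
      using B(2)[of "act_vec cardioid (V x + S) - S" "act_on P cardioid (V x)"] B(1)
        mult_left_mono[of _ _ B] by fastforce
    also have "\<dots> < e" using C by (simp add: pos_divide_less_eq)
    finally show "norm (U (act_vec cardioid (V x + S) - S) - U (act_on P cardioid (V x))) < e" .
  qed
qed

lemma net_approximable_cx_affine:
  fixes U :: "complex^'w::finite \<Rightarrow> complex^'w"
  assumes "cx_affine U" shows "net_approximable cardioid U"
  using net_approximable_partial_cardioid[OF assms cx_affine_translation[of 0], of "{}"]
  by (simp add: act_on_def)

definition vec_upd :: "'a^'w \<Rightarrow> 'w \<Rightarrow> 'a \<Rightarrow> 'a^'w" where
  "vec_upd x p c = (\<chi> k. if k = p then c else x$k)"

lemma vec_upd_nth [simp]: "vec_upd x p c $ k = (if k = p then c else x$k)"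
  by (simp add: vec_upd_def)

lemma vec_upd_vec_upd_same [simp]: "vec_upd (vec_upd x p a) p b = vec_upd x p b"
  by (simp add: vec_eq_iff)

definition coord_independent :: "'w \<Rightarrow> ('a^'w \<Rightarrow> 'b) \<Rightarrow> bool" where
  "coord_independent p f \<longleftrightarrow> (\<forall>x c. f (vec_upd x p c) = f x)"

lemma continuous_on_vec_upd [continuous_intros]:
  assumes "continuous_on S g" "continuous_on S f"
  shows "continuous_on S (\<lambda>x. vec_upd (g x) p (f x))"
  unfolding vec_upd_def
proof (intro continuous_on_vec_lambda)
  fix k show "continuous_on S (\<lambda>x. if k = p then f x else g x $ k)"
    using assms by (cases "k = p") (auto intro: continuous_intros)
qed

lemma norm_vec_upd_diff: "norm (vec_upd x p a - vec_upd x p b) \<le> norm (a - b)"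
proof -
  have "norm (vec_upd x p a - vec_upd x p b) \<le> (\<Sum>j\<in>UNIV. norm ((vec_upd x p a - vec_upd x p b)$j))"
    by (rule norm_vec_le_sum_norm_nth)
  also have "\<dots> = (\<Sum>j\<in>UNIV. if j = p then norm (a - b) else 0)"
    by (intro sum.cong) auto
  finally show ?thesis by simp
qed

lemma cx_affine_vec_upd:
  assumes "affine_form \<beta>" shows "cx_affine (\<lambda>x. vec_upd x p (\<beta> x))"
  unfolding cx_affine_iff_affine_forms
proof
  fix k show "affine_form (\<lambda>x. vec_upd x p (\<beta> x) $ k)"
    using assms by (cases "k = p") (simp_all add: affine_form_component)
qed

lemma net_approximable_update_cardioid:
  fixes \<alpha> t :: "complex^'w::finite \<Rightarrow> complex"
  assumes "affine_form \<alpha>" "affine_form t" "coord_independent p \<alpha>" "coord_independent p t"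
  shows "net_approximable cardioid
           (\<lambda>x. vec_upd x p (\<alpha> x + c * (cardioid (1 + of_real d * t x) - 1 - of_real d * t x)))"
proof -
  define V where "V = (\<lambda>x. vec_upd x p (1 + of_real d * t x))"
  define U where "U = (\<lambda>y. vec_upd y p (\<alpha> y + c * (y$p - 1 - of_real d * t y)))"
  have "cx_affine U" "cx_affine V"
    unfolding V_def U_def using assms(1,2)
    by (intro cx_affine_vec_upd affine_form_add affine_form_scale affine_form_diff
          affine_form_const affine_form_component; simp)+
  then have "net_approximable cardioid (\<lambda>x. U (act_on {p} cardioid (V x)))"
    by (rule net_approximable_partial_cardioid)
  moreover have "act_on {p} cardioid (V x) = vec_upd x p (cardioid (1 + of_real d * t x))" for x
    by (simp add: act_on_def V_def vec_eq_iff)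
  ultimately show ?thesis
    using assms(3,4) by (simp add: U_def coord_independent_def)
qed

lemma affine_form_bounded_on:
  assumes "affine_form t" "compact K"
  obtains M where "M > 0" "\<And>x. x \<in> K \<Longrightarrow> norm (t x) \<le> M"
proof -
  have "compact (t ` K)"
    by (rule compact_continuous_image[OF continuous_on_subset[OF affine_form_continuous[OF assms(1)]] assms(2)]) simp
  then have "bounded (t ` K)" by (rule compact_imp_bounded)
  then show ?thesis using that unfolding bounded_pos by auto
qed

lemma norm_vec_upd_cardioid_quotient_diff_le:
  assumes "d > 0" "d * cmod s \<le> 1/2"
  shows "norm (vec_upd x p (a + (c * (-4 / (of_real d)^2)) * (cardioid (1 + of_real d * s) - 1 - of_real d * s))
           - vec_upd x p (a + c * of_real ((Im s)^2))) \<le> cmod c * (16 * d * (cmod s)^3)"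
proof -
  have "a + (c * (-4 / D)) * X - (a + c * I) = c * (-4 * X / D - I)" for a X D I :: complex
    by (simp add: right_diff_distrib)
  then have "norm (vec_upd x p (a + (c * (-4 / (of_real d)^2)) * (cardioid (1 + of_real d * s) - 1 - of_real d * s))
           - vec_upd x p (a + c * of_real ((Im s)^2)))
      \<le> cmod c * cmod (-4 * (cardioid (1 + of_real d * s) - 1 - of_real d * s) / (of_real d)^2 - of_real ((Im s)^2))"
    using norm_vec_upd_diff[of x p] by (metis norm_mult)
  also have "\<dots> \<le> cmod c * (16 * d * (cmod s)^3)"
    using assms by (intro mult_left_mono cardioid_second_order) simp_all
  finally show ?thesis .
qed

text \<open>By \<open>cardioid_second_order\<close>, \<open>Im(t)\<^sup>2\<close> is the limit of
  \<open>-4 (cardioid (1 + d t) - 1 - d t) / d\<^sup>2\<close> as \<open>d \<rightarrow> 0\<close>, locally uniformly.\<close>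
lemma net_approximable_update_Im_square:
  fixes \<alpha> t :: "complex^'w::finite \<Rightarrow> complex"
  assumes \<alpha>: "affine_form \<alpha>" "coord_independent p \<alpha>" and t: "affine_form t" "coord_independent p t"
  shows "net_approximable cardioid (\<lambda>x. vec_upd x p (\<alpha> x + c * of_real ((Im (t x))^2)))"
proof (rule net_approximable_limit)
  show "continuous_on UNIV (\<lambda>x. vec_upd x p (\<alpha> x + c * of_real ((Im (t x))^2)))"
    using affine_form_continuous[OF \<alpha>(1)] affine_form_continuous[OF t(1)]
    by (intro continuous_on_vec_upd continuous_intros)
  fix K :: "(complex^'w) set" and e :: real
  assume K: "compact K" and e: "e > 0"
  obtain M where M: "M > 0" "\<And>x. x \<in> K \<Longrightarrow> norm (t x) \<le> M"
    using affine_form_bounded_on[OF t(1) K] by metis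
  define d where "d = min (1 / (2 * M)) (e / (32 * (cmod c + 1) * M^3))"
  have pos: "(cmod c + 1) * M^3 > 0" using M by (simp add: add_nonneg_pos)
  then have "e / (32 * (cmod c + 1) * M^3) > 0" using e by (simp only: mult.assoc) simp
  then have d: "d > 0" "d * M \<le> 1/2" using M by (simp_all add: d_def min_def field_simps)
  have "cmod c * (16 * d * M^3) \<le> (cmod c + 1) * M^3 * (16 * d)"
    using d(1) M(1) by (simp add: algebra_simps)
  also have "\<dots> \<le> (cmod c + 1) * M^3 * (16 * (e / (32 * (cmod c + 1) * M^3)))"
    using pos by (intro mult_left_mono) (simp_all add: d_def)
  also have "\<dots> = e / 2" using pos by (simp add: field_simps)
  finally have cd: "cmod c * (16 * d * M^3) < e" using e by linarith
  show "\<exists>G'. net_approximable cardioid G' \<and>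
          (\<forall>x\<in>K. norm (G' x - vec_upd x p (\<alpha> x + c * of_real ((Im (t x))^2))) < e)"
  proof (intro exI conjI ballI)
    show "net_approximable cardioid (\<lambda>x. vec_upd x p
            (\<alpha> x + (c * (-4 / (of_real d)^2)) * (cardioid (1 + of_real d * t x) - 1 - of_real d * t x)))"
      using net_approximable_update_cardioid \<alpha> t by blast
    fix x assume x: "x \<in> K"
    have "d * cmod (t x) \<le> 1/2"
      using M(2)[OF x] d by (meson mult_left_mono less_imp_le order_trans)
    then have "norm (vec_upd x p (\<alpha> x + (c * (-4 / (of_real d)^2)) * (cardioid (1 + of_real d * t x) - 1 - of_real d * t x))
             - vec_upd x p (\<alpha> x + c * of_real ((Im (t x))^2))) \<le> cmod c * (16 * d * (cmod (t x))^3)"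
      by (rule norm_vec_upd_cardioid_quotient_diff_le[OF d(1)])
    also have "\<dots> \<le> cmod c * (16 * d * M^3)"
      using M(2)[OF x] d(1) by (intro mult_left_mono power_mono) auto
    finally show "norm (vec_upd x p (\<alpha> x + (c * (-4 / (of_real d)^2)) * (cardioid (1 + of_real d * t x) - 1 - of_real d * t x))
             - vec_upd x p (\<alpha> x + c * of_real ((Im (t x))^2))) < e"
      using cd by linarith
  qed
qed

text \<open>\<open>Im t = ((Im t + L)\<^sup>2 - L\<^sup>2 - (Im t)\<^sup>2) / (2 L)\<close>, and the last term is small for large \<open>L\<close>.\<close>
lemma net_approximable_update_Im:
  fixes \<alpha> t :: "complex^'w::finite \<Rightarrow> complex"
  assumes \<alpha>: "affine_form \<alpha>" "coord_independent p \<alpha>" and t: "affine_form t" "coord_independent p t"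
  shows "net_approximable cardioid (\<lambda>x. vec_upd x p (\<alpha> x + c * of_real (Im (t x))))"
proof (rule net_approximable_limit)
  show "continuous_on UNIV (\<lambda>x. vec_upd x p (\<alpha> x + c * of_real (Im (t x))))"
    using affine_form_continuous[OF \<alpha>(1)] affine_form_continuous[OF t(1)]
    by (intro continuous_on_vec_upd continuous_intros)
  fix K :: "(complex^'w) set" and e :: real
  assume K: "compact K" and e: "e > 0"
  obtain M where M: "M > 0" "\<And>x. x \<in> K \<Longrightarrow> norm (t x) \<le> M"
    using affine_form_bounded_on[OF t(1) K] by metis
  define L where "L = cmod c * M^2 / e + 1"
  have "cmod c * M^2 / e \<ge> 0" "cmod c * M^2 \<ge> 0" using e by simp_all
  moreover have "e * (2 * L) = 2 * (cmod c * M^2) + 2 * e" using e by (simp add: L_def field_simps)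
  ultimately have L: "L > 0" "cmod c * M^2 < e * (2 * L)"
    using e unfolding L_def by linarith+
  define \<alpha>' where "\<alpha>' = (\<lambda>x. \<alpha> x - c * of_real L / 2)"
  define t' where "t' = (\<lambda>x. t x + \<i> * of_real L)"
  define c' where "c' = c / (2 * of_real L)"
  show "\<exists>G'. net_approximable cardioid G' \<and>
          (\<forall>x\<in>K. norm (G' x - vec_upd x p (\<alpha> x + c * of_real (Im (t x)))) < e)"
  proof (intro exI conjI ballI)
    show "net_approximable cardioid (\<lambda>x. vec_upd x p (\<alpha>' x + c' * of_real ((Im (t' x))^2)))"
      using \<alpha> t unfolding \<alpha>'_def t'_def coord_independent_def
      by (intro net_approximable_update_Im_square affine_form_diff affine_form_add affine_form_const)
         (simp_all add: coord_independent_def)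
    fix x assume x: "x \<in> K"
    have "(\<alpha>' x + c' * of_real ((Im (t' x))^2)) - (\<alpha> x + c * of_real (Im (t x)))
        = c * of_real ((Im (t x))^2 / (2 * L))"
      using L(1) by (simp add: \<alpha>'_def t'_def c'_def field_simps power2_eq_square)
    then have "norm (vec_upd x p (\<alpha>' x + c' * of_real ((Im (t' x))^2)) - vec_upd x p (\<alpha> x + c * of_real (Im (t x))))
        \<le> cmod c * ((Im (t x))^2 / (2 * L))"
      using norm_vec_upd_diff[of x p] L(1) by (metis abs_of_nonneg norm_mult norm_of_real
          zero_le_divide_iff zero_le_power2 less_imp_le mult_nonneg_nonneg zero_le_numeral)
    also have "\<dots> \<le> cmod c * (M^2 / (2 * L))"
      using L(1) power_mono[OF order_trans[OF abs_Im_le_cmod M(2)[OF x]], of 2]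
      by (intro mult_left_mono divide_right_mono) auto
    also have "\<dots> < e" using L by (simp add: pos_divide_less_eq)
    finally show "norm (vec_upd x p (\<alpha>' x + c' * of_real ((Im (t' x))^2))
                    - vec_upd x p (\<alpha> x + c * of_real (Im (t x)))) < e" .
  qed
qed

lemma bounded_linear_eq_Im_affine_form:
  fixes f :: "complex^'n::finite \<Rightarrow> real"
  assumes "bounded_linear f"
  obtains \<beta> where "affine_form \<beta>" "\<And>z. f z = Im (\<beta> z)"
proof -
  have lf: "linear f" using assms by (rule bounded_linear.linear)
  have dec: "z = (\<Sum>j\<in>UNIV. Re (z$j) *\<^sub>R axis j 1 + Im (z$j) *\<^sub>R axis j \<i>)" for z :: "complex^'n"
    by (simp add: vec_eq_iff sum_component axis_def complex_eq_iff if_distrib cong: if_cong)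
  define a where "a = (\<lambda>j. of_real (f (axis j \<i>)) + \<i> * of_real (f (axis j 1)))"
  define \<beta> where "\<beta> = (\<lambda>z::complex^'n. \<Sum>j\<in>UNIV. a j * z$j)"
  have "affine_form \<beta>" unfolding affine_form_def \<beta>_def
    by (intro exI[of _ a] exI[of _ 0]) simp
  moreover have "f z = Im (\<beta> z)" for z
  proof -
    have "f z = (\<Sum>j\<in>UNIV. f (Re (z$j) *\<^sub>R axis j 1 + Im (z$j) *\<^sub>R axis j \<i>))"
      by (subst dec) (rule linear_sum[OF lf])
    also have "\<dots> = (\<Sum>j\<in>UNIV. Re (z$j) * f (axis j 1) + Im (z$j) * f (axis j \<i>))"
      by (simp add: linear_add[OF lf] linear_scale[OF lf])
    also have "\<dots> = Im (\<beta> z)"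
      unfolding \<beta>_def a_def by (simp add: Im_sum algebra_simps)
    finally show ?thesis .
  qed
  ultimately show ?thesis using that by blast
qed

section \<open>Networks as register machines\<close>

text \<open>The updates of \<open>net_approximable_update_Im\<close> may not read the register they write, so
  adding to \<open>acc\<close> goes through a copy of \<open>acc\<close> in the scratch register \<open>tmp\<close>.\<close>
locale registers =
  fixes inp :: "'n::finite \<Rightarrow> 'w::finite" and acc tmp :: 'w
  assumes acc_not_input: "acc \<notin> range inp" and tmp_not_input: "tmp \<notin> range inp"
    and acc_ne_tmp: "acc \<noteq> tmp"
begin

definition input :: "complex^'w \<Rightarrow> complex^'n" where
  "input x = (\<chi> j. x $ inp j)"

definition add_to_acc :: "(complex^'n \<Rightarrow> complex) \<Rightarrow> complex^'w \<Rightarrow> complex^'w" where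
  "add_to_acc f x = vec_upd (vec_upd x acc (x$acc + f (input x))) tmp 0"

definition realizable :: "(complex^'n \<Rightarrow> real) \<Rightarrow> bool" where
  "realizable \<phi> \<longleftrightarrow> continuous_on UNIV \<phi> \<and>
     (\<forall>c. net_approximable cardioid (add_to_acc (\<lambda>z. c * of_real (\<phi> z))))"

lemma input_vec_upd: "p \<notin> range inp \<Longrightarrow> input (vec_upd x p c) = input x"
  unfolding input_def by (auto simp: vec_eq_iff)

lemma input_vec_upd_acc [simp]: "input (vec_upd x acc c) = input x"
  and input_vec_upd_tmp [simp]: "input (vec_upd x tmp c) = input x"
  using input_vec_upd acc_not_input tmp_not_input by auto

lemma cx_affine_input: "cx_affine input"
  unfolding cx_affine_iff_affine_forms input_def by (simp add: affine_form_component)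

lemma input_continuous: "continuous_on UNIV input"
  by (rule cx_affine_continuous[OF cx_affine_input])

lemma coord_independent_input: "p \<notin> range inp \<Longrightarrow> coord_independent p (\<lambda>x. \<beta> (input x))"
  unfolding coord_independent_def by (simp add: input_vec_upd)

lemma add_to_acc_add_to_acc: "add_to_acc g (add_to_acc f x) = add_to_acc (\<lambda>z. f z + g z) x"
  unfolding add_to_acc_def using acc_ne_tmp by (simp add: vec_eq_iff)

lemma add_to_acc_continuous: "continuous_on UNIV f \<Longrightarrow> continuous_on UNIV (add_to_acc f)"
  unfolding add_to_acc_def
  by (intro continuous_on_vec_upd continuous_intros continuous_on_compose2[OF _ input_continuous]) auto

lemma norm_add_to_acc_diff: "norm (add_to_acc f x - add_to_acc g x) \<le> norm (f (input x) - g (input x))"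
proof -
  have "norm (add_to_acc f x - add_to_acc g x) \<le> (\<Sum>j\<in>UNIV. norm ((add_to_acc f x - add_to_acc g x)$j))"
    by (rule norm_vec_le_sum_norm_nth)
  also have "\<dots> = (\<Sum>j\<in>UNIV. if j = acc then norm (f (input x) - g (input x)) else 0)"
    unfolding add_to_acc_def using acc_ne_tmp by (intro sum.cong) auto
  finally show ?thesis by simp
qed

lemma net_approximable_add_to_acc_add:
  assumes "net_approximable cardioid (add_to_acc f)" "net_approximable cardioid (add_to_acc g)"
  shows "net_approximable cardioid (add_to_acc (\<lambda>z. f z + g z))"
  using assms by (rule net_approximable_compose_eq) (rule add_to_acc_add_to_acc)

lemma net_approximable_add_to_acc_zero: "net_approximable cardioid (add_to_acc (\<lambda>z. 0))"
proof -
  have "add_to_acc (\<lambda>z. 0) = (\<lambda>x. vec_upd x tmp 0)"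
    unfolding add_to_acc_def by (auto simp: vec_eq_iff)
  then show ?thesis
    using net_approximable_cx_affine[OF cx_affine_vec_upd[OF affine_form_const]] by simp
qed

lemma net_approximable_add_to_acc_divide:
  assumes "r \<noteq> 0" "net_approximable cardioid (add_to_acc f)"
  shows "net_approximable cardioid (add_to_acc (\<lambda>z. f z / r))"
proof -
  have scale_acc: "net_approximable cardioid (\<lambda>x. vec_upd x acc (r' * x$acc))" for r'
    by (intro net_approximable_cx_affine cx_affine_vec_upd affine_form_scale affine_form_component)
  show ?thesis
    by (rule net_approximable_compose_eq[OF net_approximable_compose[OF scale_acc[of r] assms(2)]
          scale_acc[of "1/r"]])
       (use assms(1) acc_ne_tmp in \<open>auto simp: add_to_acc_def vec_eq_iff field_simps\<close>)
qed

lemma net_approximable_copy_acc: "net_approximable cardioid (\<lambda>x. vec_upd x tmp (x$acc))"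
  and net_approximable_clear_tmp: "net_approximable cardioid (\<lambda>x. vec_upd x tmp 0)"
  by (intro net_approximable_cx_affine cx_affine_vec_upd affine_form_component affine_form_const)+

lemma coord_independent_tmp: "coord_independent acc (\<lambda>x. x$tmp)"
  unfolding coord_independent_def using acc_ne_tmp by simp

lemma net_approximable_add_to_acc_Im:
  assumes "affine_form \<beta>"
  shows "net_approximable cardioid (add_to_acc (\<lambda>z. c * of_real (Im (\<beta> z))))"
proof -
  have "net_approximable cardioid (\<lambda>x. vec_upd x acc (x$tmp + c * of_real (Im (\<beta> (input x)))))"
    by (intro net_approximable_update_Im affine_form_component coord_independent_tmp
        affine_form_compose[OF assms cx_affine_input] coord_independent_input acc_not_input)
  from net_approximable_compose[OF net_approximable_copy_acc this]
  show ?thesis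
    by (rule net_approximable_compose_eq[OF _ net_approximable_clear_tmp])
       (use acc_ne_tmp in \<open>auto simp: add_to_acc_def vec_eq_iff\<close>)
qed

lemma net_approximable_add_Im_acc_square:
  "net_approximable cardioid (\<lambda>x. vec_upd (vec_upd x acc (x$acc + s * of_real ((Im (x$acc))^2))) tmp 0)"
proof -
  have "net_approximable cardioid (\<lambda>x. vec_upd x acc (x$tmp + s * of_real ((Im (x$tmp))^2)))"
    by (intro net_approximable_update_Im_square affine_form_component coord_independent_tmp)
  from net_approximable_compose[OF net_approximable_copy_acc this]
  show ?thesis
    by (rule net_approximable_compose_eq[OF _ net_approximable_clear_tmp])
       (use acc_ne_tmp in \<open>auto simp: vec_eq_iff\<close>)
qed

lemma realizable_add:
  assumes "realizable \<phi>" "realizable \<psi>" shows "realizable (\<lambda>z. \<phi> z + \<psi> z)"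
  unfolding realizable_def
proof (intro conjI allI)
  show "continuous_on UNIV (\<lambda>z. \<phi> z + \<psi> z)"
    using assms unfolding realizable_def by (intro continuous_on_add) auto
  fix c
  have "net_approximable cardioid (add_to_acc (\<lambda>z. c * of_real (\<phi> z) + c * of_real (\<psi> z)))"
    using assms unfolding realizable_def by (intro net_approximable_add_to_acc_add) auto
  then show "net_approximable cardioid (add_to_acc (\<lambda>z. c * of_real (\<phi> z + \<psi> z)))"
    by (simp add: distrib_left)
qed

lemma realizable_scale:
  assumes "realizable \<phi>" shows "realizable (\<lambda>z. r * \<phi> z)"
  unfolding realizable_def
proof (intro conjI allI)
  show "continuous_on UNIV (\<lambda>z. r * \<phi> z)"
    using assms unfolding realizable_def by (intro continuous_on_mult_left) auto
  fix c
  have "net_approximable cardioid (add_to_acc (\<lambda>z. (c * of_real r) * of_real (\<phi> z)))"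
    using assms unfolding realizable_def by blast
  then show "net_approximable cardioid (add_to_acc (\<lambda>z. c * of_real (r * \<phi> z)))"
    by (simp add: mult.assoc)
qed

lemma realizable_Im_affine_form: "affine_form \<beta> \<Longrightarrow> realizable (\<lambda>z. Im (\<beta> z))"
  unfolding realizable_def using affine_form_continuous
  by (blast intro: continuous_on_Im net_approximable_add_to_acc_Im)

lemma realizable_const: "realizable (\<lambda>z. k)"
  using realizable_Im_affine_form[OF affine_form_const[of "\<i> * of_real k"]] by simp

text \<open>Adding \<open>i \<phi>\<close> to \<open>acc\<close> shifts \<open>Im acc\<close> by \<open>\<phi>\<close>; the squares of \<open>Im acc\<close> taken after
  this shift and after undoing it differ by \<open>(Im acc + \<phi>)\<^sup>2 - (Im acc)\<^sup>2\<close>.\<close>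
lemma net_approximable_add_square_difference:
  assumes "realizable \<phi>"
  shows "net_approximable cardioid
           (\<lambda>x. vec_upd (vec_upd x acc (x$acc + of_real ((Im (x$acc) + \<phi> (input x))^2 - (Im (x$acc))^2))) tmp 0)"
proof -
  have E: "net_approximable cardioid (add_to_acc (\<lambda>z. c * of_real (\<phi> z)))" for c
    using assms unfolding realizable_def by blast
  from net_approximable_compose[OF net_approximable_compose[OF
         E[of \<i>] net_approximable_add_Im_acc_square[of 1]] E[of "-\<i>"]]
  show ?thesis
    by (rule net_approximable_compose_eq[OF _ net_approximable_add_Im_acc_square[of "-1"]])
       (use acc_ne_tmp in \<open>auto simp: add_to_acc_def vec_eq_iff\<close>)
qed

lemma realizable_square:
  assumes "realizable \<phi>" shows "realizable (\<lambda>z. (\<phi> z)^2)"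
  unfolding realizable_def
proof (intro conjI allI)
  show "continuous_on UNIV (\<lambda>z. (\<phi> z)^2)"
    using assms unfolding realizable_def by (intro continuous_intros) auto
  have "realizable (\<lambda>z. (-1) * \<phi> z)" by (rule realizable_scale[OF assms])
  have double: "net_approximable cardioid (add_to_acc (\<lambda>z. 2 * of_real ((\<phi> z)^2)))"
    using net_approximable_add_square_difference[OF assms]
      net_approximable_add_square_difference[OF \<open>realizable (\<lambda>z. (-1) * \<phi> z)\<close>]
    by (rule net_approximable_compose_eq)
       (use acc_ne_tmp in \<open>auto simp: add_to_acc_def vec_eq_iff power2_eq_square algebra_simps\<close>)
  fix c :: complex
  show "net_approximable cardioid (add_to_acc (\<lambda>z. c * of_real ((\<phi> z)^2)))"
  proof (cases "c = 0")
    case True then show ?thesis using net_approximable_add_to_acc_zero by simp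
  next
    case False
    then show ?thesis
      using net_approximable_add_to_acc_divide[OF _ double, of "2 / c"] by (simp add: field_simps)
  qed
qed

lemma realizable_mult:
  assumes "realizable \<phi>" "realizable \<psi>" shows "realizable (\<lambda>z. \<phi> z * \<psi> z)"
proof -
  have "realizable (\<lambda>z. (1/2) * (\<phi> z + \<psi> z)^2 + ((-1/2) * (\<phi> z)^2 + (-1/2) * (\<psi> z)^2))"
    by (intro realizable_add realizable_scale realizable_square assms)
  moreover have "(\<lambda>z. (1/2) * (\<phi> z + \<psi> z)^2 + ((-1/2) * (\<phi> z)^2 + (-1/2) * (\<psi> z)^2)) = (\<lambda>z. \<phi> z * \<psi> z)"
    by (simp add: power2_eq_square algebra_simps)
  ultimately show ?thesis by simp
qed

lemma realizable_limit:
  assumes cont: "continuous_on UNIV \<phi>"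
    and approx: "\<And>K e. compact K \<Longrightarrow> e > 0 \<Longrightarrow> \<exists>\<psi>. realizable \<psi> \<and> (\<forall>z\<in>K. \<bar>\<phi> z - \<psi> z\<bar> < e)"
  shows "realizable \<phi>"
  unfolding realizable_def
proof (intro conjI allI cont)
  fix c :: complex
  show "net_approximable cardioid (add_to_acc (\<lambda>z. c * of_real (\<phi> z)))"
  proof (rule net_approximable_limit)
    show "continuous_on UNIV (add_to_acc (\<lambda>z. c * of_real (\<phi> z)))"
      using cont by (intro add_to_acc_continuous continuous_intros)
    fix L :: "(complex^'w) set" and e :: real
    assume L: "compact L" and e: "e > 0"
    have "compact (input ` L)"
      by (rule compact_continuous_image[OF continuous_on_subset[OF input_continuous] L]) simp
    moreover have c1: "cmod c + 1 > 0" using norm_ge_zero[of c] by linarith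
    moreover have e': "e / (cmod c + 1) > 0" using e c1 by simp
    ultimately obtain \<psi> where \<psi>: "realizable \<psi>" "\<And>z. z \<in> input ` L \<Longrightarrow> \<bar>\<phi> z - \<psi> z\<bar> < e / (cmod c + 1)"
      using approx by meson
    show "\<exists>G'. net_approximable cardioid G' \<and> (\<forall>x\<in>L. norm (G' x - add_to_acc (\<lambda>z. c * of_real (\<phi> z)) x) < e)"
    proof (intro exI conjI ballI)
      show "net_approximable cardioid (add_to_acc (\<lambda>z. c * of_real (\<psi> z)))"
        using \<psi>(1) unfolding realizable_def by blast
      fix x assume x: "x \<in> L"
      have "norm (add_to_acc (\<lambda>z. c * of_real (\<psi> z)) x - add_to_acc (\<lambda>z. c * of_real (\<phi> z)) x)
          \<le> cmod c * \<bar>\<phi> (input x) - \<psi> (input x)\<bar>"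
      proof -
        have "c * of_real (\<psi> (input x)) - c * of_real (\<phi> (input x))
            = c * of_real (\<psi> (input x) - \<phi> (input x))"
          by (simp add: algebra_simps)
        then show ?thesis
          using norm_add_to_acc_diff[of "\<lambda>z. c * of_real (\<psi> z)" x "\<lambda>z. c * of_real (\<phi> z)"]
          by (simp only: norm_mult norm_of_real abs_minus_commute)
      qed
      also have "\<dots> \<le> cmod c * (e / (cmod c + 1))"
        using \<psi>(2)[of "input x"] x by (intro mult_left_mono) auto
      also have "\<dots> < (cmod c + 1) * (e / (cmod c + 1))"
        using e' by (intro mult_strict_right_mono) auto
      also have "\<dots> = e" using c1 by simp
      finally show "norm (add_to_acc (\<lambda>z. c * of_real (\<psi> z)) x - add_to_acc (\<lambda>z. c * of_real (\<phi> z)) x) < e" .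
    qed
  qed
qed

lemma realizable_polynomial: "real_polynomial_function \<phi> \<Longrightarrow> realizable \<phi>"
proof (induction rule: real_polynomial_function.induct)
  case (linear f)
  then obtain \<beta> where "affine_form \<beta>" "\<And>z. f z = Im (\<beta> z)"
    using bounded_linear_eq_Im_affine_form by metis
  then have "f = (\<lambda>z. Im (\<beta> z))" by auto
  then show ?case using realizable_Im_affine_form[OF \<open>affine_form \<beta>\<close>] by simp
next
  case (const c)
  show ?case by (rule realizable_const)
next
  case (add f g)
  show ?case using add.IH by (rule realizable_add)
next
  case (mult f g)
  show ?case using mult.IH by (rule realizable_mult)
qed

lemma realizable_continuous: "continuous_on UNIV \<phi> \<Longrightarrow> realizable \<phi>"
proof (rule realizable_limit)
  fix K :: "(complex^'n) set" and e :: real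
  assume "continuous_on UNIV \<phi>" "compact K" "e > 0"
  then obtain g where "real_polynomial_function g" "\<And>x. x \<in> K \<Longrightarrow> \<bar>\<phi> x - g x\<bar> < e"
    using Stone_Weierstrass_real_polynomial_function[OF \<open>compact K\<close>
        continuous_on_subset[OF \<open>continuous_on UNIV \<phi>\<close> subset_UNIV] \<open>e > 0\<close>] by blast
  then show "\<exists>\<psi>. realizable \<psi> \<and> (\<forall>z\<in>K. \<bar>\<phi> z - \<psi> z\<bar> < e)"
    using realizable_polynomial by blast
qed

lemma net_approximable_add_to_acc:
  assumes "continuous_on UNIV h"
  shows "net_approximable cardioid (add_to_acc h)"
proof -
  have "realizable (\<lambda>z. Re (h z))" "realizable (\<lambda>z. Im (h z))"
    using continuous_on_Re[OF assms] continuous_on_Im[OF assms] by (simp_all add: realizable_continuous)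
  then have "net_approximable cardioid (add_to_acc (\<lambda>z. 1 * of_real (Re (h z)) + \<i> * of_real (Im (h z))))"
    unfolding realizable_def by (intro net_approximable_add_to_acc_add) blast+
  moreover have "(\<lambda>z. 1 * of_real (Re (h z)) + \<i> * of_real (Im (h z))) = h"
    by (simp add: fun_eq_iff complex_eq_iff)
  ultimately show ?thesis by simp
qed

end

lemma universal_NN_of_net_approximable_lifts:
  assumes lift: "\<And>g :: complex^'n::finite \<Rightarrow> complex^'m::finite. continuous_on UNIV g \<Longrightarrow>
             \<exists>(E :: complex^'n \<Rightarrow> complex^'w::finite) P M.
             cx_affine E \<and> cx_affine P \<and> net_approximable \<rho> M \<and> (\<forall>z. P (M (E z)) = g z)"
  shows "universal (NN \<rho> TYPE('w) :: (complex^'n \<Rightarrow> complex^'m) set)"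
  unfolding universal_def
proof (intro allI impI)
  fix g :: "complex^'n \<Rightarrow> complex^'m" and K :: "(complex^'n) set" and \<epsilon> :: real
  assume "continuous_on UNIV g \<and> compact K \<and> 0 < \<epsilon>"
  then have g: "continuous_on UNIV g" and K: "compact K" and \<epsilon>: "\<epsilon> > 0" by auto
  obtain E :: "complex^'n \<Rightarrow> complex^'w" and P M where E: "cx_affine E" and P: "cx_affine P"
    and M: "net_approximable \<rho> M" and PME: "\<And>z. P (M (E z)) = g z"
    using lift[OF g] by blast
  obtain B where B: "B > 0" "\<And>x y. norm (P x - P y) \<le> B * norm (x - y)"
    using cx_affine_lipschitz[OF P] by metis
  have "compact (E ` K)"
    by (rule compact_continuous_image[OF continuous_on_subset[OF cx_affine_continuous[OF E]] K]) simp
  then obtain U and h :: "complex^'w \<Rightarrow> complex^'w" where U: "cx_affine U" "h \<in> nn_hidden \<rho>"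
    and Uh: "\<And>x. x \<in> E ` K \<Longrightarrow> norm (U (h x) - M x) < \<epsilon> / B"
    using net_approximableD[OF M, of "E ` K" "\<epsilon> / B"] \<epsilon> B(1) by auto
  show "\<exists>f\<in>NN \<rho> TYPE('w). \<forall>z\<in>K. norm (f z - g z) < \<epsilon>"
  proof (intro bexI ballI)
    show "(\<lambda>z. P (U (h (E z)))) \<in> NN \<rho> TYPE('w)"
      unfolding NN_def
      by (rule CollectI, rule exI[of _ "\<lambda>y. P (U y)"], rule exI[of _ "\<lambda>z. h (E z)"])
         (simp add: cx_affine_compose[OF P U(1)] nn_hidden_precompose[OF U(2) E])
    fix z assume "z \<in> K"
    have "norm (P (U (h (E z))) - g z) \<le> B * norm (U (h (E z)) - M (E z))"
      using B(2) by (simp flip: PME)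
    also have "\<dots> < B * (\<epsilon> / B)" using Uh[of "E z"] \<open>z \<in> K\<close> B(1) by (intro mult_strict_left_mono) auto
    finally show "norm (P (U (h (E z))) - g z) < \<epsilon>" using B(1) by simp
  qed
qed

lemma net_approximable_add_outputs:
  fixes inp :: "'n::finite \<Rightarrow> 'w::finite" and out :: "'m::finite \<Rightarrow> 'w"
    and g :: "complex^'n \<Rightarrow> complex^'m"
  assumes out: "inj out" "\<And>i. out i \<notin> range inp" "\<And>i. out i \<noteq> tmp"
    and tmp: "tmp \<notin> range inp" and g: "continuous_on UNIV g" and "finite I"
  shows "net_approximable cardioid
           (\<lambda>x. vec_upd (x + (\<Sum>i\<in>I. axis (out i) (g (\<chi> j. x $ inp j) $ i))) tmp 0)"
proof -
  define S where "S I x = (\<Sum>i\<in>I. axis (out i) (g (\<chi> j. x $ inp j) $ i))" for I x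
  have "net_approximable cardioid (\<lambda>x. vec_upd (x + S I x) tmp 0)"
    using \<open>finite I\<close>
  proof induction
    case empty
    show ?case using net_approximable_cx_affine[OF cx_affine_vec_upd[OF affine_form_const]]
      by (simp add: S_def)
  next
    case (insert i I)
    interpret registers inp "out i" tmp using out tmp by unfold_locales auto
    have "net_approximable cardioid (add_to_acc (\<lambda>z. g z $ i))"
      using g by (intro net_approximable_add_to_acc continuous_intros)
    moreover have "add_to_acc (\<lambda>z. g z $ i) (vec_upd (x + S I x) tmp 0) = vec_upd (x + S (insert i I) x) tmp 0"
      for x
    proof -
      have "inp j \<noteq> out i'" "inp j \<noteq> tmp" for j i' using out(2)[of i'] tmp by (metis rangeI)+
      then have input: "input (x + S I x) = (\<chi> j. x $ inp j)"
        by (simp add: input_def vec_eq_iff S_def sum_component axis_def)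
      have out_i: "S I x $ out i = 0" using insert.hyps out(1) by (simp add: S_def sum_component axis_def inj_eq)
      have S_insert: "S (insert i I) x = axis (out i) (g (\<chi> j. x $ inp j) $ i) + S I x"
        using insert.hyps by (simp add: S_def)
      show ?thesis
        using out(3) by (auto simp: add_to_acc_def vec_eq_iff axis_def input out_i S_insert)
    qed
    ultimately show ?case by (rule net_approximable_compose_eq[OF insert.IH])
  qed
  then show ?thesis by (simp add: S_def)
qed

lemma net_approximable_lift:
  fixes inp :: "'n::finite \<Rightarrow> 'w::finite" and out :: "'m::finite \<Rightarrow> 'w"
    and g :: "complex^'n \<Rightarrow> complex^'m"
  assumes inp: "inj inp" and out: "inj out" "\<And>i. out i \<notin> range inp" "\<And>i. out i \<noteq> tmp"
    and tmp: "tmp \<notin> range inp" and g: "continuous_on UNIV g"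
  shows "\<exists>(E :: complex^'n \<Rightarrow> complex^'w) P M.
           cx_affine E \<and> cx_affine P \<and> net_approximable cardioid M \<and> (\<forall>z. P (M (E z)) = g z)"
proof (intro exI conjI allI)
  define E :: "complex^'n \<Rightarrow> complex^'w" where "E = (*v) (\<chi> k j. if k = inp j then 1 else 0)"
  define P :: "complex^'w \<Rightarrow> complex^'m" where "P = (*v) (\<chi> i k. if k = out i then 1 else 0)"
  show "cx_affine E" "cx_affine P" unfolding E_def P_def by (rule cx_affine_matrix_vector_mult)+
  show "net_approximable cardioid
          (\<lambda>x. vec_upd (x + (\<Sum>i\<in>UNIV. axis (out i) (g (\<chi> j. x $ inp j) $ i))) tmp 0)"
    by (rule net_approximable_add_outputs[OF out tmp g]) simp
  fix z
  have "E z $ inp j = z $ j" for j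
    using inp by (simp add: E_def matrix_vector_mult_def inj_eq if_distrib[of "\<lambda>c. c * _"] cong: if_cong)
  moreover have "E z $ out i = 0" for i
  proof -
    have "out i \<noteq> inp j" for j using out(2)[of i] by (metis rangeI)
    then show ?thesis by (simp add: E_def matrix_vector_mult_def)
  qed
  ultimately show "P (vec_upd (E z + (\<Sum>i\<in>UNIV. axis (out i) (g (\<chi> j. E z $ inp j) $ i))) tmp 0) = g z"
    using out(1,3) by (simp add: P_def matrix_vector_mult_def vec_eq_iff sum_component axis_def inj_eq
        if_distrib[of "\<lambda>c. c * _"] cong: if_cong)
qed

lemma register_layout_exists:
  assumes "CARD('w) = CARD('n) + CARD('m) + 1"
  obtains inp :: "'n::finite \<Rightarrow> 'w::finite" and out :: "'m::finite \<Rightarrow> 'w" and tmp :: 'w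
  where "inj inp" "inj out" "\<And>i. out i \<notin> range inp" "\<And>i. out i \<noteq> tmp" "tmp \<notin> range inp"
proof -
  have "card (UNIV :: ('n + 'm) option set) = card (UNIV :: 'w set)"
    using assms by (simp add: card_UNIV_option card_UNIV_sum)
  then obtain b :: "('n + 'm) option \<Rightarrow> 'w" where "bij b"
    using finite_same_card_bij[of "UNIV :: ('n + 'm) option set" "UNIV :: 'w set"] by auto
  then have b: "b x = b y \<longleftrightarrow> x = y" for x y by (auto simp: bij_def inj_eq)
  show ?thesis
    by (rule that[of "\<lambda>j. b (Some (Inl j))" "\<lambda>i. b (Some (Inr i))" "b None"]) (auto simp: inj_def b)
qed

theorem mainTheorem9:
  assumes "CARD('w::finite) = CARD('n::finite) + CARD('m::finite) + 1"
  shows "universal (NN cardioid TYPE('w) :: (complex ^ 'n \<Rightarrow> complex ^ 'm) set)"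
proof -
  obtain inp :: "'n \<Rightarrow> 'w" and out :: "'m \<Rightarrow> 'w" and tmp :: 'w
    where "inj inp" "inj out" "\<And>i. out i \<notin> range inp" "\<And>i. out i \<noteq> tmp" "tmp \<notin> range inp"
    using register_layout_exists[OF assms] by metis
  then show ?thesis
    by (intro universal_NN_of_net_approximable_lifts net_approximable_lift)
qed

end
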